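(* Let $\theta=\sqrt{5-\pi^2/3}$. For all $x\in[-2,0)$, $$g(x):=2x-2x^2-\frac43x^3+\frac75\theta\big(-x^2-2x\big)^{3/2}<0.$$ *)

theory Defs
  imports Complex_Main
begin

end

theory Submission
  imports Defs "HOL-Analysis.Complex_Transcendental"
begin

text \<open>Put \<open>t = -x \<in> (0, 2]\<close>. Then \<open>-x\<^sup>2 - 2x = t(2 - t)\<close> and the polynomial part of
  \<open>g\<close> is \<open>-t(2 + 2t - 4t\<^sup>2/3)\<close>, so after squaring the claim reduces to the polynomial
  inequality \<open>c\<^sup>2 t(2 - t)\<^sup>3 < (2 + 2t - 4t\<^sup>2/3)\<^sup>2\<close> with \<open>c = 7\<theta>/5\<close>. Since
  \<open>\<pi> > 3.14\<close> gives \<open>c\<^sup>2 \<le> 3.36\<close>, it suffices to prove this for \<open>c\<^sup>2 = 3.36\<close>, which is done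
  by expanding the difference in the Bernstein basis of \<open>[0, 1/2]\<close>, \<open>[1/2, 1]\<close> and \<open>[1, 2]\<close>,
  where all coefficients turn out to be positive.\<close>

lemma quartic_Bernstein_pos:
  fixes a b t c0 c1 c2 c3 c4 :: real
  assumes "a \<le> t" "t \<le> b" "a < b"
    and "0 < c0" "0 \<le> c1" "0 \<le> c2" "0 \<le> c3" "0 < c4"
  shows "0 < c0*(b-t)^4 + c1*((t-a)*(b-t)^3) + c2*((t-a)^2*(b-t)^2)
             + c3*((t-a)^3*(b-t)) + c4*(t-a)^4"
proof -
  have "0 < (b-t)^4 \<or> 0 < (t-a)^4"
    using assms(1-3) by (cases "t = a") auto
  then have "0 < c0*(b-t)^4 + c4*(t-a)^4"
    using assms(4,8) by (auto intro: add_pos_nonneg add_nonneg_pos)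
  moreover have "0 \<le> c1*((t-a)*(b-t)^3) + c2*((t-a)^2*(b-t)^2) + c3*((t-a)^3*(b-t))"
    using assms(1,2,5-7) by simp
  ultimately show ?thesis by linarith
qed

lemma quartic_ineq_on_0_2:
  fixes t :: real
  assumes "0 \<le> t" "t \<le> 2"
  shows "336/100 * t*(2-t)^3 < (2 + 2*t - 4/3*t^2)^2"
proof -
  let ?d = "(2 + 2*t - 4/3*t^2)^2 - 336/100 * t*(2-t)^3"
  consider "t \<le> 1/2" | "1/2 \<le> t" "t \<le> 1" | "1 \<le> t" by linarith
  then have "0 < ?d"
  proof cases
    case 1
    have "?d/16 = 4*(1/2-t)^4 + 164/25*((t-0)*(1/2-t)^3) + 407/75*((t-0)^2*(1/2-t)^2)
                  + 299/75*((t-0)^3*(1/2-t)) + 1297/900*(t-0)^4"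
      by algebra
    moreover have "0 < \<dots>"
      using assms 1 by (intro quartic_Bernstein_pos) auto
    ultimately show ?thesis by simp
  next
    case 2
    have "?d/16 = 1297/900*(1-t)^4 + 1697/225*((t-1/2)*(1-t)^3) + 1207/75*((t-1/2)^2*(1-t)^2)
                  + 604/45*((t-1/2)^3*(1-t)) + 844/225*(t-1/2)^4"
      by algebra
    moreover have "0 < \<dots>"
      using 2 by (intro quartic_Bernstein_pos) auto
    ultimately show ?thesis by simp
  next
    case 3
    have "?d = 844/225*(2-t)^4 + 4088/225*((t-1)*(2-t)^3) + 76/3*((t-1)^2*(2-t)^2)
               + 56/9*((t-1)^3*(2-t)) + 4/9*(t-1)^4"
      by algebra
    moreover have "0 < \<dots>"
      using assms 3 by (intro quartic_Bernstein_pos) auto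
    ultimately show ?thesis by simp
  qed
  then show ?thesis by simp
qed

lemma powr_three_halves: "0 \<le> y \<Longrightarrow> y powr (3/2) = y * sqrt (y::real)"
  using powr_mult_base[of y "1/2"] by (simp add: powr_half_sqrt)

lemma theta_constant_sq_le: "(7/5 * sqrt (5 - pi^2/3))^2 \<le> 336/100"
proof -
  have "314/100 * (314/100) \<le> pi * pi"
    using pi_approx(1) by (intro mult_mono) auto
  moreover have "pi * pi \<le> 315/100 * (315/100)"
    using pi_approx(2) by (intro mult_mono) auto
  ultimately have pi_sq: "98596/10000 \<le> pi^2" "pi^2 \<le> 10"
    by (simp_all add: power2_eq_square)
  then have "(sqrt (5 - pi^2/3))^2 = 5 - pi^2/3"
    by simp
  then have "(7/5 * sqrt (5 - pi^2/3))^2 = 49/25 * (5 - pi^2/3)"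
    unfolding power_mult_distrib by (simp add: power2_eq_square)
  with pi_sq(1) show ?thesis
    by simp
qed

lemma scaled_powr_lt_cubic:
  fixes c t :: real
  assumes "0 < t" "t \<le> 2" "c^2 \<le> 336/100"
  shows "c * (t*(2-t)) powr (3/2) < t * (2 + 2*t - 4/3*t^2)"
proof -
  define y where "y = t*(2-t)"
  define q where "q = 2 + 2*t - 4/3*t^2"
  have "0 \<le> y" using assms(1,2) by (simp add: y_def)
  have "0 < q"
  proof -
    have "4/3*t^2 \<le> 8/3*t"
      using assms(1,2) by (simp add: power2_eq_square)
    then show ?thesis using assms(2) by (simp add: q_def)
  qed
  have "(c * (y * sqrt y))^2 = c^2 * y^3"
    using \<open>0 \<le> y\<close> by (simp add: power_mult_distrib power2_eq_square power3_eq_cube)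
  also have "\<dots> \<le> 336/100 * y^3"
    using assms(3) \<open>0 \<le> y\<close> by (intro mult_right_mono) auto
  also have "\<dots> = t^2 * (336/100 * t*(2-t)^3)"
    by (simp add: y_def power_mult_distrib power2_eq_square power3_eq_cube)
  also have "\<dots> < t^2 * q^2"
    using quartic_ineq_on_0_2[of t] assms(1,2) by (simp add: q_def)
  also have "\<dots> = (t * q)^2"
    by (simp add: power_mult_distrib)
  finally have "c * (y * sqrt y) < t * q"
    by (rule power2_less_imp_less) (use assms(1) \<open>0 < q\<close> in simp)
  then show ?thesis
    using \<open>0 \<le> y\<close> by (simp add: powr_three_halves y_def q_def)
qed

theorem lemmaA1:
  fixes x :: real
  assumes "-2 \<le> x" and "x < 0"
  shows "2*x - 2*x^2 - 4/3*x^3 + 7/5 * sqrt (5 - pi^2/3) * (- (x^2) - 2*x) powr (3/2) < 0"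
proof -
  have radicand: "- (x^2) - 2*x = (-x) * (2 - (-x))"
    by (simp add: power2_eq_square algebra_simps)
  have polynomial_part: "2*x - 2*x^2 - 4/3*x^3 = - ((-x) * (2 + 2*(-x) - 4/3*(-x)^2))"
    by (simp add: power2_eq_square power3_eq_cube algebra_simps)
  have "7/5 * sqrt (5 - pi^2/3) * ((-x) * (2 - (-x))) powr (3/2)
                   < (-x) * (2 + 2*(-x) - 4/3*(-x)^2)"
    using assms theta_constant_sq_le
    by (intro scaled_powr_lt_cubic) auto
  then show ?thesis
    unfolding radicand polynomial_part by linarith
qed

end
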